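(* Let $N\ge2$, $d\ge1$, and let $\tilde\psi:\mathbb{R}\to\mathbb{R}$ be a positive, bounded, continuous function with $\tilde K:=\|\tilde\psi\|_\infty$ satisfying $$\int_0^\infty\min_{r\in[0,x]}\tilde\psi(r)\,dx=+\infty.$$ Let $\{t_n\}_{n\in\mathbb{N}_0}$ be an increasing sequence of nonnegative numbers with $t_0=0$, $t_n\to\infty$, and define $\alpha:[0,\infty)\to\{-1,1\}$ by $\alpha(0)=1$, $\alpha(t)=1$ on $(t_{2n},t_{2n+1})$, $\alpha(t)=-1$ on $[t_{2n+1},t_{2n+2}]$, $n\in\mathbb{N}_0$. Assume $$t_{2n+2}-t_{2n+1}<\frac{\ln2}{\tilde K},\qquad t_{2n+1}-t_{2n}>\frac1{\tilde K}\qquad\forall n\in\mathbb{N}_0,$$ and $$\sum_{p=0}^{\infty}\ln\left(\frac{e^{\tilde K(t_{2p+2}-t_{2p+1})}}{2-e^{\tilde K(t_{2p+2}-t_{2p+1})}}\right)<+\infty.$$ Then every solution $\{(x_i,v_i)\}_{i=1,\dots,N}$ of $$\frac{d}{dt}x_i(t)=v_i(t),\qquad \frac{d}{dt}v_i(t)=\frac{1}{N-1}\sum_{j\ne i}\alpha(t)\,\tilde\psi(|x_i(t)-x_j(t)|)\,(v_j(t)-v_i(t)),\quad t>0,$$ with $x_i(0)=x_i^0$, $v_i(0)=v_i^0\in\mathbb{R}^d$, exhibits asymptotic flocking: there is $d^*>0$ with $\sup_{t\ge0}d_X(t)\le d^*$, and $\lim_{t\to\infty}d_V(t)=0$, where $d_X(t):=\max_{i,j}|x_i(t)-x_j(t)|$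 and $d_V(t):=\max_{i,j}|v_i(t)-v_j(t)|$.
   Context: $\mathbb{N}_0=\{0,1,2,\dots\}$. A solution is a continuous function, $C^1$ on each interval $(t_n,t_{n+1})$, satisfying the system there. *)

theory Defs
  imports "HOL-Analysis.Analysis"
begin

text \<open>Switching function alpha on [0,oo) determined by the switching times t.
  Outside [0,oo) (or outside the covered intervals) the value is irrelevant; we put 1.\<close>
definition switch_alpha :: "(nat \<Rightarrow> real) \<Rightarrow> real \<Rightarrow> real" where
  "switch_alpha t s =
     (if s = 0 then 1
      else if (\<exists>n. t (2*n) < s \<and> s < t (2*n+1)) then 1
      else if (\<exists>n. t (2*n+1) \<le> s \<and> s \<le> t (2*n+2)) then -1
      else 1)"

definition diamX :: "nat \<Rightarrow> (nat \<Rightarrow> real \<Rightarrow> 'a::real_normed_vector) \<Rightarrow> real \<Rightarrow> real" where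
  "diamX N x s = Max {norm (x i s - x j s) | i j. i < N \<and> j < N}"

end

theory Submission
  imports Defs
begin

text \<open>The diameters D_X and D_V are maxima over pairs of agents and need not be differentiable,
  so they are controlled through upper right Dini derivatives. Let \<phi>(r) be the minimum of \<psi>
  on [0, r] and \<Phi> its primitive. On a positive phase (alpha = 1) the pair realising D_V is
  contracted, D_V' <= - \<phi>(D_X) D_V, while D_X' <= D_V; hence D_V + \<Phi>(D_X) does not increase.
  On a negative phase of length \<tau> this functional grows at most by the factor exp (3 K \<tau>), and
  since ln (e^(K \<tau>) / (2 - e^(K \<tau>))) >= 2 K \<tau> the negative phases have finite total length.
  So the functional stays bounded, and as \<Phi> is unbounded, D_X stays below some R. From then on
  each positive phase, lasting longer than 1/K, multiplies D_V by at most exp (- \<phi>(R) / K),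
  while all negative phases together multiply it by a bounded factor; thus D_V tends to 0.\<close>

section \<open>Upper right Dini derivatives\<close>

definition right_dini_le :: "(real \<Rightarrow> real) \<Rightarrow> real \<Rightarrow> real \<Rightarrow> bool" where
  "right_dini_le F s c \<longleftrightarrow> (\<forall>e>0. eventually (\<lambda>y. F y \<le> F s + (c + e) * (y - s)) (at_right s))"

lemma right_dini_le_mono:
  assumes "right_dini_le F s c" "c \<le> d"
  shows "right_dini_le F s d"
  unfolding right_dini_le_def
proof (intro allI impI)
  fix e :: real assume e: "e > 0"
  have "eventually (\<lambda>y. F y \<le> F s + (c + e) * (y - s)) (at_right s)"
    using assms(1) e unfolding right_dini_le_def by blast
  then show "eventually (\<lambda>y. F y \<le> F s + (d + e) * (y - s)) (at_right s)"
    using eventually_at_right_less[of s]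
  proof eventually_elim
    case (elim y)
    have "(c + e) * (y - s) \<le> (d + e) * (y - s)"
      using elim assms(2) by (intro mult_right_mono) auto
    then show ?case using elim by linarith
  qed
qed

lemma right_dini_le_epsilon:
  assumes "\<And>e. e > 0 \<Longrightarrow> right_dini_le F s (c + e)"
  shows "right_dini_le F s c"
  unfolding right_dini_le_def
proof (intro allI impI)
  fix e :: real assume e: "e > 0"
  have "right_dini_le F s (c + e/2)" using assms e by simp
  then have "eventually (\<lambda>y. F y \<le> F s + ((c + e/2) + e/2) * (y - s)) (at_right s)"
    using e unfolding right_dini_le_def by (meson half_gt_zero)
  then show "eventually (\<lambda>y. F y \<le> F s + (c + e) * (y - s)) (at_right s)"
    by (simp add: add.commute)
qed

lemma right_dini_le_tendsto:
  assumes "eventually (\<lambda>y. F y - F s \<le> g y * (y - s)) (at_right s)"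
    and "(g \<longlongrightarrow> c) (at_right s)"
  shows "right_dini_le F s c"
  unfolding right_dini_le_def
proof (intro allI impI)
  fix e :: real assume e: "e > 0"
  have "eventually (\<lambda>y. g y < c + e) (at_right s)"
    using assms(2) e by (intro order_tendstoD) auto
  with assms(1) eventually_at_right_less[of s]
  show "eventually (\<lambda>y. F y \<le> F s + (c + e) * (y - s)) (at_right s)"
  proof eventually_elim
    case (elim y)
    have "g y * (y - s) \<le> (c + e) * (y - s)" using elim by (intro mult_right_mono) auto
    then show ?case using elim by linarith
  qed
qed

lemma right_dini_le_derivative:
  assumes "(F has_real_derivative d) (at s)"
  shows "right_dini_le F s d"
proof (rule right_dini_le_tendsto[where g = "\<lambda>y. (F y - F s) / (y - s)"])
  have "(F has_real_derivative d) (at s within {s<..})"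
    using assms by (rule has_field_derivative_at_within)
  then show "((\<lambda>y. (F y - F s) / (y - s)) \<longlongrightarrow> d) (at_right s)"
    by (simp add: has_field_derivative_iff)
  show "eventually (\<lambda>y. F y - F s \<le> (F y - F s) / (y - s) * (y - s)) (at_right s)"
    using eventually_at_right_less[of s] by eventually_elim auto
qed

lemma right_dini_le_add:
  assumes "right_dini_le F s c" "right_dini_le G s d"
  shows "right_dini_le (\<lambda>y. F y + G y) s (c + d)"
  unfolding right_dini_le_def
proof (intro allI impI)
  fix e :: real assume e: "e > 0"
  have "eventually (\<lambda>y. F y \<le> F s + (c + e/2) * (y - s)) (at_right s)"
    "eventually (\<lambda>y. G y \<le> G s + (d + e/2) * (y - s)) (at_right s)"
    using assms e unfolding right_dini_le_def by simp_all
  then show "eventually (\<lambda>y. F y + G y \<le> F s + G s + (c + d + e) * (y - s)) (at_right s)"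
  proof eventually_elim
    case (elim y)
    have "(c + e/2) * (y - s) + (d + e/2) * (y - s) = (c + d + e) * (y - s)"
      by (simp add: algebra_simps)
    then show ?case using elim by linarith
  qed
qed

lemma right_dini_le_norm:
  fixes a :: "real \<Rightarrow> 'a::real_normed_vector"
  assumes "(a has_vector_derivative a') (at s)"
  shows "right_dini_le (\<lambda>y. norm (a y)) s (norm a')"
  unfolding right_dini_le_def
proof (intro allI impI)
  fix e :: real assume e: "e > 0"
  have "(a has_derivative (\<lambda>h. h *\<^sub>R a')) (at s within {s<..})"
    using assms unfolding has_vector_derivative_def by (rule has_derivative_at_withinI)
  then have "((\<lambda>y. norm ((a y - a s) - (y - s) *\<^sub>R a') / norm (y - s)) \<longlongrightarrow> 0) (at_right s)"
    by (simp add: has_derivative_iff_norm)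
  then have "eventually (\<lambda>y. norm ((a y - a s) - (y - s) *\<^sub>R a') / norm (y - s) < e) (at_right s)"
    using e by (intro order_tendstoD) auto
  with eventually_at_right_less[of s]
  show "eventually (\<lambda>y. norm (a y) \<le> norm (a s) + (norm a' + e) * (y - s)) (at_right s)"
  proof eventually_elim
    case (elim y)
    then have rem: "norm ((a y - a s) - (y - s) *\<^sub>R a') \<le> e * (y - s)"
      by (simp add: divide_less_eq)
    have "a y = a s + ((y - s) *\<^sub>R a' + ((a y - a s) - (y - s) *\<^sub>R a'))" by simp
    then have "norm (a y) \<le> norm (a s) + (norm ((y - s) *\<^sub>R a') + norm ((a y - a s) - (y - s) *\<^sub>R a'))"
      by (metis norm_triangle_ineq norm_triangle_le add_left_mono)
    moreover have "norm ((y - s) *\<^sub>R a') = (y - s) * norm a'" using elim by simp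
    moreover have "(norm a' + e) * (y - s) = (y - s) * norm a' + e * (y - s)"
      by (simp add: algebra_simps)
    ultimately show ?case using rem by linarith
  qed
qed

lemma right_dini_le_norm_inner:
  fixes a :: "real \<Rightarrow> 'a::real_inner"
  assumes "(a has_vector_derivative a') (at s)" and "a s \<noteq> 0"
  shows "right_dini_le (\<lambda>y. norm (a y)) s ((a s \<bullet> a') / norm (a s))"
proof (rule right_dini_le_derivative)
  have "(a has_derivative (\<lambda>h. h *\<^sub>R a')) (at s)"
    using assms(1) by (simp add: has_vector_derivative_def)
  from has_derivative_compose[OF this has_derivative_norm[OF assms(2)]]
  have "((\<lambda>y. norm (a y)) has_derivative (\<lambda>h. (h *\<^sub>R a') \<bullet> sgn (a s))) (at s)"
    by (simp add: o_def)
  then show "((\<lambda>y. norm (a y)) has_real_derivative ((a s \<bullet> a') / norm (a s))) (at s)"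
    unfolding has_field_derivative_def
    by (rule has_derivative_eq_rhs)
      (auto simp: fun_eq_iff sgn_div_norm inner_commute divide_inverse mult_ac)
qed

lemma right_dini_le_Max:
  fixes f :: "'i \<Rightarrow> real \<Rightarrow> real"
  assumes fin: "finite I" and ne: "I \<noteq> {}"
    and cont: "\<And>k. k \<in> I \<Longrightarrow> (f k \<longlongrightarrow> f k s) (at_right s)"
    and maximal: "\<And>k. k \<in> I \<Longrightarrow> f k s = Max ((\<lambda>k. f k s) ` I) \<Longrightarrow> right_dini_le (f k) s c"
  shows "right_dini_le (\<lambda>y. Max ((\<lambda>k. f k y) ` I)) s c"
  unfolding right_dini_le_def
proof (intro allI impI)
  fix e :: real assume e: "e > 0"
  define M where "M = Max ((\<lambda>k. f k s) ` I)"
  have each: "eventually (\<lambda>y. f k y \<le> M + (c + e) * (y - s)) (at_right s)" if k: "k \<in> I" for k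
  proof (cases "f k s = M")
    case True
    then show ?thesis using maximal k e unfolding right_dini_le_def M_def by auto
  next
    case False
    have "f k s \<le> M" unfolding M_def using fin k by (intro Max_ge) auto
    with False have "f k s < M" by simp
    moreover have "((\<lambda>y. f k y - (c + e) * (y - s)) \<longlongrightarrow> f k s - (c + e) * (s - s)) (at_right s)"
      using cont k by (intro tendsto_intros) auto
    ultimately have "eventually (\<lambda>y. f k y - (c + e) * (y - s) < M) (at_right s)"
      by (intro order_tendstoD) auto
    then show ?thesis by eventually_elim simp
  qed
  have "eventually (\<lambda>y. \<forall>k\<in>I. f k y \<le> M + (c + e) * (y - s)) (at_right s)"
    using fin each by (intro eventually_ball_finite) auto
  then show "eventually (\<lambda>y. Max ((\<lambda>k. f k y) ` I) \<le> Max ((\<lambda>k. f k s) ` I) + (c + e) * (y - s))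
      (at_right s)"
    by eventually_elim (use fin ne in \<open>auto simp: M_def\<close>)
qed

lemma right_dini_le_exp_mult:
  assumes "right_dini_le F s d"
  shows "right_dini_le (\<lambda>y. exp (- c * y) * F y) s (exp (- c * s) * d - c * exp (- c * s) * F s)"
proof (rule right_dini_le_epsilon)
  fix \<eta> :: real assume \<eta>: "\<eta> > 0"
  define \<epsilon> where "\<epsilon> = \<eta> / exp (- c * s)"
  have \<epsilon>: "\<epsilon> > 0" unfolding \<epsilon>_def using \<eta> by simp
  define g where "g y = exp (- c * y) * (d + \<epsilon>) + F s * ((exp (- c * y) - exp (- c * s)) / (y - s))"
    for y
  have "((\<lambda>y. exp (- c * y)) has_real_derivative (- c * exp (- c * s))) (at s within {s<..})"
    by (auto intro!: derivative_eq_intros)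
  then have "((\<lambda>y. (exp (- c * y) - exp (- c * s)) / (y - s)) \<longlongrightarrow> - c * exp (- c * s)) (at_right s)"
    by (simp add: has_field_derivative_iff)
  then have "(g \<longlongrightarrow> exp (- c * s) * (d + \<epsilon>) + F s * (- c * exp (- c * s))) (at_right s)"
    unfolding g_def by (intro tendsto_intros) auto
  moreover have eq: "exp (- c * s) * (d + \<epsilon>) + F s * (- c * exp (- c * s))
      = exp (- c * s) * d - c * exp (- c * s) * F s + \<eta>"
    unfolding \<epsilon>_def by (simp add: algebra_simps)
  ultimately have lim: "(g \<longlongrightarrow> exp (- c * s) * d - c * exp (- c * s) * F s + \<eta>) (at_right s)"
    by (simp only: eq)
  have "eventually (\<lambda>y. F y \<le> F s + (d + \<epsilon>) * (y - s)) (at_right s)"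
    using assms \<epsilon> unfolding right_dini_le_def by auto
  then have "eventually (\<lambda>y. exp (- c * y) * F y - exp (- c * s) * F s \<le> g y * (y - s)) (at_right s)"
    using eventually_at_right_less[of s]
  proof eventually_elim
    case (elim y)
    have "exp (- c * y) * (F y - F s) \<le> exp (- c * y) * ((d + \<epsilon>) * (y - s))"
      using elim by (intro mult_left_mono) auto
    moreover have "g y * (y - s)
        = exp (- c * y) * ((d + \<epsilon>) * (y - s)) + F s * (exp (- c * y) - exp (- c * s))"
      unfolding g_def using elim by (simp add: field_simps)
    ultimately show ?case by (simp add: algebra_simps)
  qed
  then show "right_dini_le (\<lambda>y. exp (- c * y) * F y) s
      (exp (- c * s) * d - c * exp (- c * s) * F s + \<eta>)"
    using lim by (rule right_dini_le_tendsto)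
qed

lemma right_dini_nonpos_imp_le_slack:
  assumes ab: "a \<le> b" and cont: "continuous_on {a..b} H"
    and dini: "\<And>s. s \<in> {a..<b} \<Longrightarrow> right_dini_le H s 0" and e: "e > 0"
  shows "H b \<le> H a + e * (b - a)"
proof -
  \<comment> \<open>The largest point up to which the inequality holds must be b.\<close>
  define S where "S = {a..b} \<inter> (\<lambda>u. H u - H a - e * (u - a)) -` {..0}"
  have "continuous_on {a..b} (\<lambda>u. H u - H a - e * (u - a))"
    using cont by (intro continuous_intros) auto
  then have "closed S" unfolding S_def by (intro continuous_closed_preimage) auto
  moreover have "a \<in> S" using ab unfolding S_def by auto
  moreover have bdd: "bdd_above S" unfolding S_def by (rule bdd_aboveI[of _ b]) auto
  ultimately have sup_S: "Sup S \<in> S" using closed_contains_Sup by blast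
  have "Sup S = b"
  proof (rule ccontr)
    assume "Sup S \<noteq> b"
    with sup_S have less: "Sup S < b" "a \<le> Sup S" unfolding S_def by auto
    have "eventually (\<lambda>y. H y \<le> H (Sup S) + (0 + e) * (y - Sup S)) (at_right (Sup S))"
      using dini less e unfolding right_dini_le_def by auto
    moreover have "eventually (\<lambda>y. y \<in> {Sup S<..<b}) (at_right (Sup S))"
      using less by (intro eventually_at_right_real)
    ultimately have "eventually (\<lambda>y. H y \<le> H (Sup S) + e * (y - Sup S) \<and> y \<in> {Sup S<..<b})
        (at_right (Sup S))"
      by eventually_elim auto
    then obtain y where y: "H y \<le> H (Sup S) + e * (y - Sup S)" "Sup S < y" "y < b"
      using eventually_happens'[OF trivial_limit_at_right_real] by fastforce
    have "H (Sup S) \<le> H a + e * (Sup S - a)" using sup_S unfolding S_def by auto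
    then have "y \<in> S" using y less unfolding S_def by (auto simp: algebra_simps)
    then have "y \<le> Sup S" using bdd by (rule cSup_upper)
    with y show False by simp
  qed
  with sup_S show ?thesis unfolding S_def by auto
qed

lemma right_dini_nonpos_imp_le_closed:
  assumes ab: "a \<le> b" and cont: "continuous_on {a..b} H"
    and dini: "\<And>s. s \<in> {a..<b} \<Longrightarrow> right_dini_le H s 0"
  shows "H b \<le> H a"
proof (cases "a = b")
  case False
  with ab have ba: "b - a > 0" by simp
  show ?thesis
  proof (rule field_le_epsilon)
    fix e :: real assume "e > 0"
    then have "H b \<le> H a + (e / (b - a)) * (b - a)"
      using ba by (intro right_dini_nonpos_imp_le_slack[OF ab cont dini]) auto
    then show "H b \<le> H a + e" using ba by simp
  qed
qed simp

lemma right_dini_nonpos_imp_le: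
  assumes ab: "a \<le> b" and cont: "continuous_on {a..b} H"
    and dini: "\<And>s. s \<in> {a<..<b} \<Longrightarrow> right_dini_le H s 0"
  shows "H b \<le> H a"
proof (cases "a = b")
  case False
  with ab have ab': "a < b" by simp
  have "eventually (\<lambda>y. y \<in> {a<..<b}) (at_right a)"
    using ab' by (rule eventually_at_right_real)
  then have ev: "eventually (\<lambda>y. H b \<le> H y) (at_right a)"
  proof eventually_elim
    case (elim y)
    show ?case
      by (rule right_dini_nonpos_imp_le_closed)
        (use elim cont dini in \<open>auto intro: continuous_on_subset\<close>)
  qed
  have "(H \<longlongrightarrow> H a) (at a within {a..b})"
    using cont ab by (simp add: continuous_on_def)
  moreover have "at a within {a..b} = at a within {a..}"
    by (rule at_within_nhd[of _ "{..<b}"]) (use ab' in auto)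
  ultimately have "(H \<longlongrightarrow> H a) (at_right a)" by (simp add: at_within_Ici_at_right)
  then show ?thesis using ev by (rule tendsto_lowerbound) simp
qed simp

lemma right_dini_gronwall:
  assumes ab: "a \<le> b" and cont: "continuous_on {a..b} F"
    and dini: "\<And>s. s \<in> {a<..<b} \<Longrightarrow> right_dini_le F s (c * F s)"
  shows "F b \<le> F a * exp (c * (b - a))"
proof -
  have decr: "exp (- c * b) * F b \<le> exp (- c * a) * F a"
  proof (rule right_dini_nonpos_imp_le[OF ab])
    show "continuous_on {a..b} (\<lambda>y. exp (- c * y) * F y)"
      using cont by (intro continuous_intros) auto
    fix s assume "s \<in> {a<..<b}"
    then have "right_dini_le (\<lambda>y. exp (- c * y) * F y) s
        (exp (- c * s) * (c * F s) - c * exp (- c * s) * F s)"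
      using dini by (intro right_dini_le_exp_mult) auto
    then show "right_dini_le (\<lambda>y. exp (- c * y) * F y) s 0" by (simp add: algebra_simps)
  qed
  have "F b = exp (c * b) * (exp (- c * b) * F b)"
    by (simp add: mult.assoc[symmetric] mult_exp_exp)
  also have "\<dots> \<le> exp (c * b) * (exp (- c * a) * F a)"
    using decr by (intro mult_left_mono) auto
  also have "\<dots> = F a * exp (c * (b - a))"
    by (simp add: mult_exp_exp algebra_simps)
  finally show ?thesis .
qed

lemma right_dini_le_const_imp_le:
  assumes ab: "a \<le> b" and cont: "continuous_on {a..b} F"
    and dini: "\<And>s. s \<in> {a<..<b} \<Longrightarrow> right_dini_le F s B"
  shows "F b \<le> F a + B * (b - a)"
proof -
  have "F b - B * b \<le> F a - B * a"
  proof (rule right_dini_nonpos_imp_le[OF ab])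
    show "continuous_on {a..b} (\<lambda>y. F y - B * y)"
      using cont by (intro continuous_intros) auto
    fix s assume "s \<in> {a<..<b}"
    have "right_dini_le (\<lambda>y. - B * y) s (- B)"
      by (rule right_dini_le_derivative) (auto intro!: derivative_eq_intros)
    from right_dini_le_add[OF dini[OF \<open>s \<in> {a<..<b}\<close>] this]
    show "right_dini_le (\<lambda>y. F y - B * y) s 0" by simp
  qed
  then show ?thesis by (simp add: algebra_simps)
qed

section \<open>The running minimum of the kernel\<close>

text \<open>The paper's \<phi>(r) = min of \<psi> on [0, r] and its primitive \<Phi>; the max avoids an empty
  range for negative r.\<close>
definition running_min :: "(real \<Rightarrow> real) \<Rightarrow> real \<Rightarrow> real" where
  "running_min \<psi> r = Inf (\<psi> ` {0..max 0 r})"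

definition running_min_integral :: "(real \<Rightarrow> real) \<Rightarrow> real \<Rightarrow> real" where
  "running_min_integral \<psi> r = integral {0..r} (running_min \<psi>)"

locale positive_kernel =
  fixes \<psi> :: "real \<Rightarrow> real"
  assumes pos: "\<And>r. \<psi> r > 0" and cont: "continuous_on UNIV \<psi>"
begin

abbreviation "\<phi> \<equiv> running_min \<psi>"
abbreviation "\<Phi> \<equiv> running_min_integral \<psi>"

lemma bdd_below_image: "bdd_below (\<psi> ` A)"
  using pos by (intro bdd_belowI[of _ 0]) (auto intro: less_imp_le)

lemma running_min_pos: "\<phi> r > 0"
proof -
  have "continuous_on {0..max 0 r} \<psi>" using cont continuous_on_subset by blast
  then obtain y where y: "y \<in> {0..max 0 r}" "\<forall>z\<in>{0..max 0 r}. \<psi> y \<le> \<psi> z"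
    using continuous_attains_inf[of "{0..max 0 r}" \<psi>] by auto
  then have "\<phi> r = \<psi> y"
    unfolding running_min_def by (intro cInf_eq_minimum) auto
  with pos show ?thesis by simp
qed

lemma running_min_le: "0 \<le> y \<Longrightarrow> y \<le> r \<Longrightarrow> \<phi> r \<le> \<psi> y"
  unfolding running_min_def by (rule cInf_lower) (auto intro: bdd_below_image)

lemma running_min_antimono: "r \<le> r' \<Longrightarrow> \<phi> r' \<le> \<phi> r"
  unfolding running_min_def by (rule cInf_superset_mono) (auto intro: bdd_below_image)

lemma mono_uminus_running_min: "mono (\<lambda>r. - \<phi> r)"
  by (auto intro!: monoI running_min_antimono)

lemma running_min_integrable: "\<phi> integrable_on {a..b}"
proof -
  have "(\<lambda>r. - \<phi> r) integrable_on {a..b}"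
    using mono_uminus_running_min by (intro integrable_on_mono_on) (auto simp: mono_def mono_on_def)
  then show ?thesis using integrable_neg by fastforce
qed

lemma running_min_integral_diff:
  "0 \<le> r \<Longrightarrow> r \<le> r' \<Longrightarrow> \<Phi> r' - \<Phi> r = integral {r..r'} \<phi>"
  unfolding running_min_integral_def
  using Henstock_Kurzweil_Integration.integral_combine[where a = 0 and c = r and b = r' and f = \<phi>]
    running_min_integrable
  by auto

lemma running_min_integral_mono:
  assumes "0 \<le> r" "r \<le> r'" shows "\<Phi> r \<le> \<Phi> r'"
proof -
  have "0 \<le> integral {r..r'} \<phi>"
    by (rule integral_nonneg) (auto intro: running_min_integrable less_imp_le running_min_pos)
  then show ?thesis using assms running_min_integral_diff by force
qed

lemma running_min_integral_increment_le:
  assumes "0 \<le> r" "r \<le> r'" shows "\<Phi> r' - \<Phi> r \<le> \<phi> r * (r' - r)"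
proof -
  have "integral {r..r'} \<phi> \<le> integral {r..r'} (\<lambda>_. \<phi> r)"
    by (rule integral_le) (auto intro: running_min_integrable running_min_antimono)
  then show ?thesis using assms by (simp add: running_min_integral_diff mult.commute)
qed

lemma running_min_integral_nonneg: "0 \<le> r \<Longrightarrow> 0 \<le> \<Phi> r"
  using running_min_integral_mono[of 0 r] by (simp add: running_min_integral_def)

lemma running_min_integral_le_add:
  assumes "0 \<le> r" "0 \<le> r'" "r' \<le> r + \<delta>" "0 \<le> \<delta>"
  shows "\<Phi> r' \<le> \<Phi> r + \<psi> 0 * \<delta>"
proof (cases "r \<le> r'")
  case True
  have "\<Phi> r' - \<Phi> r \<le> \<phi> r * (r' - r)"
    using running_min_integral_increment_le assms True by blast
  also have "\<dots> \<le> \<psi> 0 * \<delta>"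
    using running_min_le[of 0 r] running_min_pos[of r] True assms by (intro mult_mono) auto
  finally show ?thesis by simp
next
  case False
  then have "\<Phi> r' \<le> \<Phi> r" using running_min_integral_mono assms by simp
  moreover have "0 \<le> \<psi> 0 * \<delta>" using pos[of 0] assms by simp
  ultimately show ?thesis by linarith
qed

lemma lipschitz_on_running_min_integral: "(\<psi> 0)-lipschitz_on {0..} \<Phi>"
proof (rule lipschitz_onI)
  have incr: "\<bar>\<Phi> r' - \<Phi> r\<bar> \<le> \<psi> 0 * (r' - r)" if "0 \<le> r" "r \<le> r'" for r r'
    using running_min_integral_le_add[of r r' "r' - r"] running_min_integral_mono[of r r'] that
    by auto
  fix r r' :: real assume "r \<in> {0..}" "r' \<in> {0..}"
  then show "dist (\<Phi> r) (\<Phi> r') \<le> \<psi> 0 * dist r r'"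
    using incr[of r r'] incr[of r' r]
    by (cases "r \<le> r'") (auto simp: dist_real_def abs_minus_commute)
qed (use pos[of 0] in simp)

lemma continuous_on_running_min_integral: "continuous_on {0..} \<Phi>"
  using lipschitz_on_running_min_integral by (rule lipschitz_on_continuous_on)

lemma nn_integral_running_min_eq_SUP:
  "(\<integral>\<^sup>+ y\<in>{0..}. ennreal (Inf (\<psi> ` {0..y})) \<partial>lborel) = (SUP n::nat. ennreal (\<Phi> (real n)))"
proof -
  define f where "f n y = ennreal (\<phi> y) * indicator {0..real n} y" for n :: nat and y :: real
  have "(\<lambda>y. - (- \<phi> y)) \<in> borel_measurable borel"
    using borel_measurable_mono[OF mono_uminus_running_min] by measurable
  then have "\<phi> \<in> borel_measurable borel" by simp
  then have meas: "f n \<in> borel_measurable lborel" for n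
    unfolding f_def by measurable
  have "incseq f"
    unfolding f_def by (auto intro!: incseq_SucI le_funI mult_left_mono simp: indicator_def)
  then have "(\<integral>\<^sup>+ y. (SUP n. f n y) \<partial>lborel) = (SUP n. integral\<^sup>N lborel (f n))"
    using meas by (rule nn_integral_monotone_convergence_SUP)
  moreover have "(SUP n. f n y) = ennreal (Inf (\<psi> ` {0..y})) * indicator {0..} y" for y
  proof (cases "y \<ge> 0")
    case True
    obtain m :: nat where m: "y \<le> real m" using real_arch_simple by blast
    have "(SUP n. f n y) = f m y"
    proof (rule antisym)
      show "(SUP n. f n y) \<le> f m y"
        by (rule SUP_least) (use True m in \<open>auto simp: f_def indicator_def\<close>)
    qed (rule SUP_upper, simp)
    then show ?thesis using True m by (simp add: f_def running_min_def)
  qed (simp add: f_def)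
  moreover have "integral\<^sup>N lborel (f n) = ennreal (\<Phi> (real n))" for n
  proof -
    have "(\<phi> has_integral \<Phi> (real n)) {0..real n}"
      unfolding running_min_integral_def using running_min_integrable by (rule integrable_integral)
    then have "integral\<^sup>N lborel (\<lambda>y. indicator {0..real n} y * \<phi> y) = ennreal (\<Phi> (real n))"
      by (intro nn_integral_has_integral_lebesgue) (auto intro: less_imp_le running_min_pos)
    moreover have "integral\<^sup>N lborel (f n) = integral\<^sup>N lborel (\<lambda>y. indicator {0..real n} y * \<phi> y)"
      unfolding f_def by (intro nn_integral_cong) (auto simp: indicator_def)
    ultimately show ?thesis by simp
  qed
  ultimately show ?thesis by simp
qed

lemma running_min_integral_unbounded:
  assumes "(\<integral>\<^sup>+ y\<in>{0..}. ennreal (Inf (\<psi> ` {0..y})) \<partial>lborel) = \<infinity>"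
  shows "\<exists>R\<ge>0. \<Phi> R > B"
proof (rule ccontr)
  assume "\<not> ?thesis"
  then have "ennreal (\<Phi> (real n)) \<le> ennreal B" for n
    by (auto simp: not_less intro: ennreal_leI)
  then have "(SUP n::nat. ennreal (\<Phi> (real n))) \<le> ennreal B"
    by (rule SUP_least)
  moreover have "(SUP n::nat. ennreal (\<Phi> (real n))) = \<infinity>"
    using assms by (simp only: nn_integral_running_min_eq_SUP)
  ultimately show False by (simp add: top_unique)
qed

lemma right_dini_le_running_min_integral_comp:
  assumes dini: "right_dini_le G s c" and "c \<ge> 0" and G_nonneg: "\<And>y. G y \<ge> 0"
  shows "right_dini_le (\<lambda>y. \<Phi> (G y)) s (\<phi> (G s) * c)"
  unfolding right_dini_le_def
proof (intro allI impI)
  fix e :: real assume e: "e > 0"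
  define e' where "e' = e / (\<phi> (G s) + 1)"
  have e': "e' > 0" "\<phi> (G s) * e' \<le> e"
    using e running_min_pos[of "G s"] unfolding e'_def by (auto simp: field_simps)
  have "eventually (\<lambda>y. G y \<le> G s + (c + e') * (y - s)) (at_right s)"
    using dini e' unfolding right_dini_le_def by auto
  then show "eventually (\<lambda>y. \<Phi> (G y) \<le> \<Phi> (G s) + (\<phi> (G s) * c + e) * (y - s)) (at_right s)"
    using eventually_at_right_less[of s]
  proof eventually_elim
    case (elim y)
    show ?case
    proof (cases "G s \<le> G y")
      case True
      have "\<Phi> (G y) - \<Phi> (G s) \<le> \<phi> (G s) * (G y - G s)"
        using running_min_integral_increment_le[OF G_nonneg True] .
      also have "\<dots> \<le> \<phi> (G s) * ((c + e') * (y - s))"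
        using elim running_min_pos[of "G s"] by (intro mult_left_mono) auto
      also have "\<dots> = (\<phi> (G s) * c + \<phi> (G s) * e') * (y - s)"
        by (simp add: algebra_simps)
      also have "\<dots> \<le> (\<phi> (G s) * c + e) * (y - s)"
        using e' elim by (intro mult_right_mono) auto
      finally show ?thesis by simp
    next
      case False
      then have "\<Phi> (G y) \<le> \<Phi> (G s)"
        using running_min_integral_mono G_nonneg by (meson linear)
      moreover have "(\<phi> (G s) * c + e) * (y - s) \<ge> 0"
        using running_min_pos[of "G s"] \<open>c \<ge> 0\<close> e elim by auto
      ultimately show ?thesis by simp
    qed
  qed
qed

end

section \<open>Consensus fields and diameters\<close>

lemma norm_le_imp_inner_diff_nonpos:
  fixes a b :: "'a::real_inner"
  assumes "norm b \<le> norm a"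
  shows "a \<bullet> (b - a) \<le> 0"
proof -
  have "a \<bullet> (b - a) = a \<bullet> b - norm a * norm a"
    by (simp add: inner_diff_right dot_square_norm power2_eq_square)
  also have "\<dots> \<le> norm a * norm b - norm a * norm a"
    using Cauchy_Schwarz_ineq2[of a b] by (simp add: abs_le_iff)
  also have "\<dots> \<le> 0"
    using assms by (simp add: mult_left_mono)
  finally show ?thesis .
qed

lemma norm_diff_le_imp_inner_nonneg:
  fixes a b :: "'a::real_inner"
  assumes "norm (b - a) \<le> norm a"
  shows "0 \<le> a \<bullet> b"
proof -
  have "(norm (b - a))\<^sup>2 \<le> (norm a)\<^sup>2"
    using assms by (simp add: power_mono)
  then have "b \<bullet> b - 2 * (a \<bullet> b) \<le> 0"
    by (simp add: power2_norm_eq_inner algebra_simps inner_commute)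
  moreover have "b \<bullet> b \<ge> 0" by simp
  ultimately show ?thesis by linarith
qed

lemma inner_weighted_sum_le:
  assumes "\<And>k. k \<in> A \<Longrightarrow> c \<le> a k" and "\<And>k. k \<in> A \<Longrightarrow> d \<bullet> u k \<le> 0"
  shows "d \<bullet> (\<Sum>k\<in>A. a k *\<^sub>R u k) \<le> c * (\<Sum>k\<in>A. d \<bullet> u k)"
proof -
  have "d \<bullet> (\<Sum>k\<in>A. a k *\<^sub>R u k) = (\<Sum>k\<in>A. a k * (d \<bullet> u k))"
    by (simp add: inner_sum_right)
  also have "\<dots> \<le> (\<Sum>k\<in>A. c * (d \<bullet> u k))"
    using assms by (intro sum_mono mult_right_mono_neg) auto
  finally show ?thesis by (simp add: sum_distrib_left)
qed

definition consensus_field :: "nat \<Rightarrow> (nat \<Rightarrow> nat \<Rightarrow> real) \<Rightarrow> (nat \<Rightarrow> 'a::real_vector) \<Rightarrow> nat \<Rightarrow> 'a"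
  where "consensus_field N a w i = (1 / (real N - 1)) *\<^sub>R (\<Sum>k\<in>{..<N} - {i}. a i k *\<^sub>R (w k - w i))"

lemma norm_consensus_field_le:
  fixes w :: "nat \<Rightarrow> 'a::real_normed_vector"
  assumes N: "N \<ge> 2" and i: "i < N"
    and a: "\<And>k. k < N \<Longrightarrow> \<bar>a i k\<bar> \<le> K" and w: "\<And>k. k < N \<Longrightarrow> norm (w k - w i) \<le> D"
  shows "norm (consensus_field N a w i) \<le> K * D"
proof -
  have "norm (\<Sum>k\<in>{..<N} - {i}. a i k *\<^sub>R (w k - w i)) \<le> (\<Sum>k\<in>{..<N} - {i}. K * D)"
  proof (rule sum_norm_le)
    fix k assume "k \<in> {..<N} - {i}"
    then have "\<bar>a i k\<bar> \<le> K" "norm (w k - w i) \<le> D" using a w by auto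
    moreover from this have "0 \<le> K" by linarith
    ultimately show "norm (a i k *\<^sub>R (w k - w i)) \<le> K * D"
      by (simp add: mult_mono)
  qed
  also have "\<dots> = (real N - 1) * (K * D)"
    using N i by (simp add: card_Diff_singleton of_nat_diff)
  finally show ?thesis
    using N by (simp add: consensus_field_def field_simps)
qed

text \<open>For agents i and j at maximal distance every other agent lies on the side of i facing j
  and on the side of j facing i, so every interaction contracts the pair.\<close>

lemma inner_consensus_field_max_pair:
  fixes w :: "nat \<Rightarrow> 'a::real_inner"
  assumes N: "N \<ge> 2" and ij: "i < N" "j < N"
    and maximal: "\<And>k l. k < N \<Longrightarrow> l < N \<Longrightarrow> norm (w k - w l) \<le> norm (w i - w j)"
    and weights: "\<And>k l. k < N \<Longrightarrow> l < N \<Longrightarrow> c \<le> a k l" and c: "c \<ge> 0"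
  shows "(w i - w j) \<bullet> (consensus_field N a w i - consensus_field N a w j)
           \<le> - c * (norm (w i - w j))\<^sup>2"
proof -
  define d where "d = w i - w j"
  have toward_i: "d \<bullet> (w k - w i) \<le> 0" if "k < N" for k
    using norm_le_imp_inner_diff_nonpos[of "w k - w j" d] maximal[of k j] that ij
    unfolding d_def by simp
  have toward_j: "0 \<le> d \<bullet> (w k - w j)" if "k < N" for k
    using norm_diff_le_imp_inner_nonneg[of "w k - w j" d] maximal[of k i] that ij
    unfolding d_def by simp
  have sum_i: "d \<bullet> (\<Sum>k\<in>{..<N} - {i}. a i k *\<^sub>R (w k - w i)) \<le> c * (\<Sum>k<N. d \<bullet> (w k - w i))"
    using inner_weighted_sum_le[of "{..<N} - {i}" c "a i" d "\<lambda>k. w k - w i"] weights toward_i ij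
    by (simp add: sum_diff1)
  have sum_j: "c * (\<Sum>k<N. d \<bullet> (w k - w j)) \<le> d \<bullet> (\<Sum>k\<in>{..<N} - {j}. a j k *\<^sub>R (w k - w j))"
    using inner_weighted_sum_le[of "{..<N} - {j}" c "a j" "- d" "\<lambda>k. w k - w j"] weights toward_j ij
    by (simp add: sum_diff1 sum_negf)
  have "(\<Sum>k<N. d \<bullet> (w k - w i)) - (\<Sum>k<N. d \<bullet> (w k - w j)) = (\<Sum>k<N. - (d \<bullet> d))"
    unfolding sum_subtractf[symmetric] by (rule sum.cong) (auto simp: d_def algebra_simps)
  then have "c * (\<Sum>k<N. d \<bullet> (w k - w i)) - c * (\<Sum>k<N. d \<bullet> (w k - w j)) = - c * real N * (d \<bullet> d)"
    by (simp add: right_diff_distrib[symmetric])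
  moreover have "c * (real N - 1) * (d \<bullet> d) \<le> c * real N * (d \<bullet> d)"
    using c by (intro mult_right_mono mult_left_mono) auto
  ultimately have contract: "d \<bullet> (\<Sum>k\<in>{..<N} - {i}. a i k *\<^sub>R (w k - w i))
      - d \<bullet> (\<Sum>k\<in>{..<N} - {j}. a j k *\<^sub>R (w k - w j)) \<le> (real N - 1) * (- c * (d \<bullet> d))"
    using sum_i sum_j by (simp add: algebra_simps)
  have "d \<bullet> (consensus_field N a w i - consensus_field N a w j)
      = (1 / (real N - 1)) * (d \<bullet> (\<Sum>k\<in>{..<N} - {i}. a i k *\<^sub>R (w k - w i))
                             - d \<bullet> (\<Sum>k\<in>{..<N} - {j}. a j k *\<^sub>R (w k - w j)))"
    by (simp add: consensus_field_def inner_diff_right algebra_simps)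
  also have "\<dots> \<le> (1 / (real N - 1)) * ((real N - 1) * (- c * (d \<bullet> d)))"
    using N contract by (intro mult_left_mono) auto
  also have "\<dots> = - c * (norm (w i - w j))\<^sup>2"
    using N by (simp add: d_def power2_norm_eq_inner)
  finally show ?thesis by (simp add: d_def)
qed

lemma diamX_eq_Max:
  "diamX N y s = Max ((\<lambda>(i, j). norm (y i s - y j s)) ` ({..<N} \<times> {..<N}))"
  unfolding diamX_def by (rule arg_cong[where f = Max]) auto

lemma norm_le_diamX: "i < N \<Longrightarrow> j < N \<Longrightarrow> norm (y i s - y j s) \<le> diamX N y s"
  unfolding diamX_eq_Max by (rule Max_ge) force+

lemma diamX_nonneg: "0 < N \<Longrightarrow> 0 \<le> diamX N y s"
  using norm_le_diamX[of 0 N 0 y s] by simp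

lemma continuous_on_Max_image:
  fixes f :: "'i \<Rightarrow> 'a::topological_space \<Rightarrow> real"
  assumes "finite I" "I \<noteq> {}" "\<And>k. k \<in> I \<Longrightarrow> continuous_on S (f k)"
  shows "continuous_on S (\<lambda>s. Max ((\<lambda>k. f k s) ` I))"
  using assms
proof (induction I rule: finite_ne_induct)
  case (insert k I)
  then have "continuous_on S (\<lambda>s. max (f k s) (Max ((\<lambda>k. f k s) ` I)))"
    by (intro continuous_on_max) auto
  then show ?case using insert by simp
qed simp

lemma continuous_on_diamX:
  assumes "0 < N" "\<And>i. i < N \<Longrightarrow> continuous_on S (y i)"
  shows "continuous_on S (\<lambda>s. diamX N y s)"
  unfolding diamX_eq_Max using assms
  by (intro continuous_on_Max_image) (auto intro!: continuous_intros)

lemma right_dini_le_diamX: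
  assumes "0 < N" and cont: "\<And>i. i < N \<Longrightarrow> isCont (y i) s"
    and maximal: "\<And>i j. i < N \<Longrightarrow> j < N \<Longrightarrow> norm (y i s - y j s) = diamX N y s
                     \<Longrightarrow> right_dini_le (\<lambda>s. norm (y i s - y j s)) s c"
  shows "right_dini_le (\<lambda>s. diamX N y s) s c"
  unfolding diamX_eq_Max
proof (rule right_dini_le_Max)
  fix p assume "p \<in> {..<N} \<times> {..<N}"
  then obtain i j where p: "p = (i, j)" "i < N" "j < N" by blast
  then have "isCont (\<lambda>s. norm (y i s - y j s)) s"
    using cont by (intro continuous_intros) auto
  then show "((\<lambda>s. case p of (i, j) \<Rightarrow> norm (y i s - y j s)) \<longlongrightarrow>
      (case p of (i, j) \<Rightarrow> norm (y i s - y j s))) (at_right s)"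
    using p continuous_at_imp_continuous_at_within continuous_within by fastforce
  assume "(case p of (i, j) \<Rightarrow> norm (y i s - y j s))
      = Max ((\<lambda>p. case p of (i, j) \<Rightarrow> norm (y i s - y j s)) ` ({..<N} \<times> {..<N}))"
  then show "right_dini_le (\<lambda>s. case p of (i, j) \<Rightarrow> norm (y i s - y j s)) s c"
    using maximal p by (simp add: diamX_eq_Max)
qed (use \<open>0 < N\<close> in auto)

lemma abs_switch_alpha: "\<bar>switch_alpha t s\<bar> = 1"
  unfolding switch_alpha_def by auto

lemma ln_exp_div_two_minus_exp_ge:
  fixes y :: real
  assumes "0 \<le> y" "y < ln 2"
  shows "2 * y \<le> ln (exp y / (2 - exp y))"
proof -
  define u where "u = exp y"
  have u: "1 \<le> u" "u < 2"
    unfolding u_def using assms exp_less_cancel_iff[of y "ln 2"] by auto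
  have "0 \<le> u * (u - 1)\<^sup>2" using u by simp
  then have "u * u * (2 - u) \<le> u" by (simp add: power2_eq_square algebra_simps)
  then have "u * u \<le> u / (2 - u)"
    using u by (simp add: field_simps)
  then have "exp (2 * y) \<le> exp y / (2 - exp y)"
    unfolding u_def by (simp add: mult_exp_exp)
  moreover have "0 < exp y / (2 - exp y)" using u unfolding u_def by simp
  ultimately show ?thesis by (simp add: ln_ge_iff)
qed

section \<open>Flocking under switching signs\<close>

locale switched_flocking = positive_kernel \<psi> for \<psi> :: "real \<Rightarrow> real" +
  fixes N :: nat and K :: real and t :: "nat \<Rightarrow> real"
    and x v :: "nat \<Rightarrow> real \<Rightarrow> 'a::real_inner"
  assumes N2: "N \<ge> 2"
    and psi_bdd: "bounded (range \<psi>)"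
    and K_def: "K = (SUP r. \<psi> r)"
    and psi_int: "(\<integral>\<^sup>+ y\<in>{0..}. ennreal (Inf (\<psi> ` {0..y})) \<partial>lborel) = \<infinity>"
    and t_mono: "strict_mono t"
    and t0: "t 0 = 0"
    and t_lim: "filterlim t at_top sequentially"
    and gap_neg: "\<And>n. t (2*n+2) - t (2*n+1) < ln 2 / K"
    and gap_pos: "\<And>n. t (2*n+1) - t (2*n) > 1 / K"
    and sum_fin: "summable (\<lambda>p. ln (exp (K * (t (2*p+2) - t (2*p+1)))
                                    / (2 - exp (K * (t (2*p+2) - t (2*p+1))))))"
    and x_cont: "\<And>i. i < N \<Longrightarrow> continuous_on {0..} (x i)"
    and v_cont: "\<And>i. i < N \<Longrightarrow> continuous_on {0..} (v i)"
    and x_ode: "\<And>i n s. i < N \<Longrightarrow> s \<in> {t n<..<t (Suc n)} \<Longrightarrow>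
                  (x i has_vector_derivative v i s) (at s)"
    and v_ode: "\<And>i n s. i < N \<Longrightarrow> s \<in> {t n<..<t (Suc n)} \<Longrightarrow>
                  (v i has_vector_derivative consensus_field N
                     (\<lambda>i j. switch_alpha t s * \<psi> (norm (x i s - x j s))) (\<lambda>j. v j s) i) (at s)"
begin

abbreviation "DX s \<equiv> diamX N x s"
abbreviation "DV s \<equiv> diamX N v s"
abbreviation "lyapunov s \<equiv> DV s + \<Phi> (DX s)"

definition neg_gap :: "nat \<Rightarrow> real" where
  "neg_gap p = t (2*p+2) - t (2*p+1)"

lemma N_pos: "0 < N"
  using N2 by simp

lemma psi_le_K: "\<psi> r \<le> K"
  unfolding K_def using psi_bdd by (intro cSUP_upper bounded_imp_bdd_above) auto

lemma K_pos: "K > 0"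
  using psi_le_K[of 0] pos[of 0] by simp

lemma t_le: "m \<le> n \<Longrightarrow> t m \<le> t n"
  using t_mono by (simp add: strict_mono_less_eq)

lemma t_nonneg: "0 \<le> t n"
  using t_le[of 0 n] t0 by simp

lemma cycle_cover:
  assumes "0 \<le> s"
  obtains n where "t (2*n) \<le> s" "s < t (2*n+2)"
proof -
  have "eventually (\<lambda>n. s < t n) sequentially"
    using t_lim by (simp add: filterlim_at_top_dense)
  then obtain M where "\<forall>n\<ge>M. s < t n" by (auto simp: eventually_sequentially)
  then have "s < t (2*M)" by simp
  define k where "k = (LEAST k. s < t (2*k))"
  have k: "s < t (2*k)" unfolding k_def by (rule LeastI) fact
  with assms t0 obtain n where n: "k = Suc n" by (cases k) auto
  then have "\<not> s < t (2*n)" unfolding k_def by (metis Least_le lessI not_less)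
  then show thesis using that[of n] k n by (simp add: not_less)
qed

lemma switch_alpha_positive_phase: "t (2*n) < s \<Longrightarrow> s < t (2*n+1) \<Longrightarrow> switch_alpha t s = 1"
  using t_nonneg[of "2*n"] unfolding switch_alpha_def by auto

lemma DX_nonneg: "0 \<le> DX s" and DV_nonneg: "0 \<le> DV s"
  using diamX_nonneg N_pos by auto

lemma lyapunov_nonneg: "0 \<le> lyapunov s"
  using DV_nonneg running_min_integral_nonneg[OF DX_nonneg] by (intro add_nonneg_nonneg)

lemma continuous_on_DX: "continuous_on {0..} DX"
  using continuous_on_diamX N_pos x_cont by blast

lemma continuous_on_DV: "continuous_on {0..} DV"
  using continuous_on_diamX N_pos v_cont by blast

lemma continuous_on_lyapunov: "continuous_on {0..} lyapunov"
proof -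
  have "continuous_on {0..} (\<lambda>s. \<Phi> (DX s))"
    by (rule continuous_on_compose2[OF continuous_on_running_min_integral continuous_on_DX])
      (auto simp: DX_nonneg)
  with continuous_on_DV show ?thesis by (rule continuous_on_add)
qed

lemma right_dini_le_DX:
  assumes s: "s \<in> {t n<..<t (Suc n)}"
  shows "right_dini_le DX s (DV s)"
proof (rule right_dini_le_diamX[OF N_pos])
  show "isCont (x i) s" if "i < N" for i
    using x_ode[OF that s] has_vector_derivative_continuous by blast
  fix i j assume ij: "i < N" "j < N"
  have "((\<lambda>s. x i s - x j s) has_vector_derivative v i s - v j s) (at s)"
    using x_ode[OF ij(1) s] x_ode[OF ij(2) s] by (rule has_vector_derivative_diff)
  then have "right_dini_le (\<lambda>s. norm (x i s - x j s)) s (norm (v i s - v j s))"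
    by (rule right_dini_le_norm)
  then show "right_dini_le (\<lambda>s. norm (x i s - x j s)) s (DV s)"
    using norm_le_diamX[OF ij] by (rule right_dini_le_mono)
qed

abbreviation "alignment_force s \<equiv>
  consensus_field N (\<lambda>i j. switch_alpha t s * \<psi> (norm (x i s - x j s))) (\<lambda>j. v j s)"

lemma norm_alignment_force_le: "i < N \<Longrightarrow> norm (alignment_force s i) \<le> K * DV s"
  using N2 by (intro norm_consensus_field_le)
    (auto simp: abs_mult abs_switch_alpha psi_le_K less_imp_le[OF pos] norm_le_diamX)

lemma v_diff_derivative:
  "i < N \<Longrightarrow> j < N \<Longrightarrow> s \<in> {t n<..<t (Suc n)} \<Longrightarrow>
    ((\<lambda>s. v i s - v j s) has_vector_derivative alignment_force s i - alignment_force s j) (at s)"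
  using v_ode by (intro has_vector_derivative_diff) auto

lemma right_dini_le_norm_v_diff:
  assumes ij: "i < N" "j < N" and s: "s \<in> {t n<..<t (Suc n)}"
  shows "right_dini_le (\<lambda>s. norm (v i s - v j s)) s (2 * K * DV s)"
proof -
  have "right_dini_le (\<lambda>s. norm (v i s - v j s)) s (norm (alignment_force s i - alignment_force s j))"
    using v_diff_derivative[OF ij s] by (rule right_dini_le_norm)
  moreover have "norm (alignment_force s i - alignment_force s j) \<le> 2 * K * DV s"
    using norm_triangle_ineq4[of "alignment_force s i" "alignment_force s j"]
      norm_alignment_force_le[OF ij(1), of s] norm_alignment_force_le[OF ij(2), of s] by linarith
  ultimately show ?thesis by (rule right_dini_le_mono)
qed

lemma right_dini_le_DV:
  assumes s: "s \<in> {t n<..<t (Suc n)}"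
  shows "right_dini_le DV s (2 * K * DV s)"
proof (rule right_dini_le_diamX[OF N_pos])
  show "isCont (v i) s" if "i < N" for i
    using v_ode[OF that s] has_vector_derivative_continuous by blast
qed (use right_dini_le_norm_v_diff s in blast)

lemma right_dini_le_DV_positive_phase:
  assumes s: "s \<in> {t (2*n)<..<t (2*n+1)}"
  shows "right_dini_le DV s (- \<phi> (DX s) * DV s)"
proof (rule right_dini_le_diamX[OF N_pos])
  have s': "s \<in> {t (2*n)<..<t (Suc (2*n))}" using s by simp
  show "isCont (v i) s" if "i < N" for i
    using v_ode[OF that s'] has_vector_derivative_continuous by blast
  fix i j assume ij: "i < N" "j < N" and max: "norm (v i s - v j s) = DV s"
  show "right_dini_le (\<lambda>s. norm (v i s - v j s)) s (- \<phi> (DX s) * DV s)"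
  proof (cases "DV s = 0")
    case True
    with right_dini_le_norm_v_diff[OF ij s'] show ?thesis by simp
  next
    case False
    with max have "v i s - v j s \<noteq> 0" by auto
    with v_diff_derivative[OF ij s']
    have "right_dini_le (\<lambda>s. norm (v i s - v j s)) s
        (((v i s - v j s) \<bullet> (alignment_force s i - alignment_force s j)) / DV s)"
      using max right_dini_le_norm_inner by fastforce
    moreover have "(v i s - v j s) \<bullet> (alignment_force s i - alignment_force s j)
        \<le> - \<phi> (DX s) * (norm (v i s - v j s))\<^sup>2"
      using switch_alpha_positive_phase s
      by (intro inner_consensus_field_max_pair N2 ij)
        (auto simp: max norm_le_diamX less_imp_le[OF running_min_pos] intro!: running_min_le)
    then have "((v i s - v j s) \<bullet> (alignment_force s i - alignment_force s j)) / DV s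
        \<le> - \<phi> (DX s) * DV s"
      using False DV_nonneg[of s] by (simp add: max divide_le_eq power2_eq_square)
    ultimately show ?thesis by (rule right_dini_le_mono)
  qed
qed

lemma interval_nonneg: "t m \<le> a \<Longrightarrow> {a..b} \<subseteq> {0..}"
  using t_nonneg[of m] by auto

lemma DX_growth:
  assumes "t m \<le> a" "a \<le> b" "b \<le> t (Suc m)" and B: "\<And>s. s \<in> {a..b} \<Longrightarrow> DV s \<le> B"
  shows "DX b \<le> DX a + B * (b - a)"
proof (rule right_dini_le_const_imp_le)
  show "continuous_on {a..b} DX"
    using continuous_on_DX interval_nonneg[OF assms(1)] by (rule continuous_on_subset)
  fix s assume "s \<in> {a<..<b}"
  with assms have "s \<in> {t m<..<t (Suc m)}" "DV s \<le> B" by auto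
  then show "right_dini_le DX s B"
    using right_dini_le_DX right_dini_le_mono by blast
qed fact

lemma DV_growth:
  assumes "t m \<le> a" "a \<le> b" "b \<le> t (Suc m)"
  shows "DV b \<le> DV a * exp (2 * K * (b - a))"
proof (rule right_dini_gronwall)
  show "continuous_on {a..b} DV"
    using continuous_on_DV interval_nonneg[OF assms(1)] by (rule continuous_on_subset)
  fix s assume "s \<in> {a<..<b}"
  with assms have "s \<in> {t m<..<t (Suc m)}" by auto
  then show "right_dini_le DV s (2 * K * DV s)" by (rule right_dini_le_DV)
qed fact

lemma DV_decay_positive_phase:
  assumes "t (2*n) \<le> a" "a \<le> b" "b \<le> t (2*n+1)"
    and c: "\<And>s. s \<in> {a..b} \<Longrightarrow> c \<le> \<phi> (DX s)"
  shows "DV b \<le> DV a * exp (- c * (b - a))"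
proof (rule right_dini_gronwall)
  show "continuous_on {a..b} DV"
    using continuous_on_DV interval_nonneg[OF assms(1)] by (rule continuous_on_subset)
  fix s assume s: "s \<in> {a<..<b}"
  with assms have "s \<in> {t (2*n)<..<t (2*n+1)}" by auto
  moreover have "- \<phi> (DX s) * DV s \<le> - c * DV s"
    using c[of s] s DV_nonneg[of s] by (auto intro: mult_right_mono)
  ultimately show "right_dini_le DV s (- c * DV s)"
    using right_dini_le_DV_positive_phase right_dini_le_mono by blast
qed fact

lemma lyapunov_antimono_positive_phase:
  assumes "t (2*n) \<le> a" "a \<le> b" "b \<le> t (2*n+1)"
  shows "lyapunov b \<le> lyapunov a"
proof (rule right_dini_nonpos_imp_le[where H = lyapunov])
  show "continuous_on {a..b} lyapunov"
    using continuous_on_lyapunov interval_nonneg[OF assms(1)] by (rule continuous_on_subset)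
  fix s assume "s \<in> {a<..<b}"
  with assms have s: "s \<in> {t (2*n)<..<t (2*n+1)}" by auto
  have "right_dini_le (\<lambda>s. \<Phi> (DX s)) s (\<phi> (DX s) * DV s)"
    using s right_dini_le_DX[of s "2*n"] DV_nonneg DX_nonneg
    by (intro right_dini_le_running_min_integral_comp) auto
  from right_dini_le_add[OF right_dini_le_DV_positive_phase[OF s] this]
  show "right_dini_le lyapunov s 0" by simp
qed fact

text \<open>On any phase D_V grows at rate at most 2K, and D_X by at most D_V, which moves
  \<Phi>(D_X) at rate at most K D_V; the factor 1 + K(b - a) is absorbed into exp (K (b - a)).\<close>

lemma lyapunov_growth:
  assumes ab: "t m \<le> a" "a \<le> b" "b \<le> t (Suc m)"
  shows "lyapunov b \<le> lyapunov a * exp (3 * K * (b - a))"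
proof -
  define B where "B = DV a * exp (2 * K * (b - a))"
  have DV_B: "DV s \<le> B" if "s \<in> {a..b}" for s
  proof -
    have "DV s \<le> DV a * exp (2 * K * (s - a))"
      using DV_growth[of m a s] ab that by auto
    also have "\<dots> \<le> B"
      unfolding B_def using DV_nonneg[of a] that K_pos by (intro mult_left_mono) auto
    finally show ?thesis .
  qed
  have B_nonneg: "0 \<le> B * (b - a)" unfolding B_def using DV_nonneg ab by simp
  have "\<Phi> (DX b) \<le> \<Phi> (DX a) + \<psi> 0 * (B * (b - a))"
    using DX_growth[OF ab DV_B] B_nonneg by (intro running_min_integral_le_add) (auto simp: DX_nonneg)
  also have "\<dots> \<le> \<Phi> (DX a) + K * (B * (b - a))"
    using psi_le_K B_nonneg by (simp add: mult_right_mono)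
  finally have "\<Phi> (DX b) \<le> \<Phi> (DX a) + K * (B * (b - a))" .
  moreover have "B + K * (B * (b - a)) \<le> DV a * exp (3 * K * (b - a))"
  proof -
    have "B + K * (B * (b - a)) = DV a * (exp (2 * K * (b - a)) * (1 + K * (b - a)))"
      unfolding B_def by (simp add: algebra_simps)
    also have "\<dots> \<le> DV a * (exp (2 * K * (b - a)) * exp (K * (b - a)))"
      using DV_nonneg exp_ge_add_one_self by (intro mult_left_mono) auto
    also have "\<dots> = DV a * exp (3 * K * (b - a))"
      by (simp add: mult_exp_exp algebra_simps)
    finally show ?thesis .
  qed
  moreover have "\<Phi> (DX a) \<le> \<Phi> (DX a) * exp (3 * K * (b - a))"
    using running_min_integral_nonneg[OF DX_nonneg[of a]] K_pos ab by (simp add: mult_le_cancel_left1)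
  ultimately show ?thesis
    using DV_B[of b] ab by (simp add: algebra_simps)
qed

lemma neg_gap_pos: "0 < neg_gap p"
  unfolding neg_gap_def using t_mono by (simp add: strict_mono_less)

lemma summable_neg_gap: "summable neg_gap"
proof -
  have "summable (\<lambda>p. (1 / (2 * K)) * ln (exp (K * (t (2*p+2) - t (2*p+1)))
                                          / (2 - exp (K * (t (2*p+2) - t (2*p+1))))))"
    using sum_fin by (rule summable_mult)
  then show ?thesis
  proof (rule summable_comparison_test')
    fix p :: nat
    have "K * neg_gap p < ln 2"
      using gap_neg[of p] K_pos unfolding neg_gap_def by (simp add: field_simps)
    then have "2 * (K * neg_gap p) \<le> ln (exp (K * neg_gap p) / (2 - exp (K * neg_gap p)))"
      using neg_gap_pos[of p] K_pos by (intro ln_exp_div_two_minus_exp_ge) auto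
    then show "norm (neg_gap p) \<le> (1 / (2 * K)) * ln (exp (K * (t (2*p+2) - t (2*p+1)))
                                          / (2 - exp (K * (t (2*p+2) - t (2*p+1)))))"
      using neg_gap_pos[of p] K_pos unfolding neg_gap_def by (simp add: field_simps)
  qed
qed

lemma sum_neg_gap_le: "(\<Sum>p<n. neg_gap p) \<le> suminf neg_gap"
  using summable_neg_gap neg_gap_pos by (intro sum_le_suminf) (auto intro: less_imp_le)

lemma cycle_growth:
  assumes F_nonneg: "\<And>s. 0 \<le> F s" and "0 \<le> c"
    and positive: "\<And>a b. t (2*n) \<le> a \<Longrightarrow> a \<le> b \<Longrightarrow> b \<le> t (2*n+1) \<Longrightarrow> F b \<le> F a"
    and negative: "\<And>a b. t (2*n+1) \<le> a \<Longrightarrow> a \<le> b \<Longrightarrow> b \<le> t (2*n+2) \<Longrightarrow>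
                     F b \<le> F a * exp (c * (b - a))"
    and s: "t (2*n) \<le> s" "s \<le> t (2*n+2)"
  shows "F s \<le> F (t (2*n)) * exp (c * neg_gap n)"
proof (cases "s \<le> t (2*n+1)")
  case True
  then have "F s \<le> F (t (2*n))" using positive s by simp
  also have "\<dots> \<le> F (t (2*n)) * exp (c * neg_gap n)"
    using F_nonneg[of "t (2*n)"] \<open>0 \<le> c\<close> neg_gap_pos[of n] by (simp add: mult_le_cancel_left1)
  finally show ?thesis .
next
  case False
  have "F s \<le> F (t (2*n+1)) * exp (c * (s - t (2*n+1)))"
    using negative False s by simp
  also have "\<dots> \<le> F (t (2*n)) * exp (c * neg_gap n)"
    using positive[of "t (2*n)" "t (2*n+1)"] t_le[of "2*n" "2*n+1"] s \<open>0 \<le> c\<close> F_nonneg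
    by (intro mult_mono) (auto simp: neg_gap_def intro: mult_left_mono)
  finally show ?thesis .
qed

lemma lyapunov_cycle:
  "t (2*n) \<le> s \<Longrightarrow> s \<le> t (2*n+2) \<Longrightarrow>
    lyapunov s \<le> lyapunov (t (2*n)) * exp (3 * K * neg_gap n)"
  using lyapunov_nonneg K_pos lyapunov_antimono_positive_phase
    lyapunov_growth[of "2*n+1"] by (intro cycle_growth) auto

lemma DV_cycle:
  assumes "t (2*n) \<le> s" "s \<le> t (2*n+2)"
  shows "DV s \<le> DV (t (2*n)) * exp (2 * K * neg_gap n)"
proof (rule cycle_growth[where F = DV])
  show "DV b \<le> DV a" if "t (2*n) \<le> a" "a \<le> b" "b \<le> t (2*n+1)" for a b
    using DV_decay_positive_phase[OF that, where c = 0] running_min_pos by (simp add: less_imp_le)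
  show "DV b \<le> DV a * exp (2 * K * (b - a))" if "t (2*n+1) \<le> a" "a \<le> b" "b \<le> t (2*n+2)" for a b
    using DV_growth[of "2*n+1" a b] that by simp
qed (use assms DV_nonneg K_pos in auto)

lemma lyapunov_even_le: "lyapunov (t (2*n)) \<le> lyapunov 0 * exp (3 * K * (\<Sum>p<n. neg_gap p))"
proof (induction n)
  case (Suc n)
  have "lyapunov (t (2 * Suc n)) \<le> lyapunov (t (2*n)) * exp (3 * K * neg_gap n)"
    using lyapunov_cycle[of n] t_le[of "2*n" "2*n+2"] by simp
  also have "\<dots> \<le> lyapunov 0 * exp (3 * K * (\<Sum>p<n. neg_gap p)) * exp (3 * K * neg_gap n)"
    using Suc.IH by (intro mult_right_mono) auto
  finally show ?case by (simp add: mult_exp_exp algebra_simps)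
qed (simp add: t0)

lemma lyapunov_bounded: "0 \<le> s \<Longrightarrow> lyapunov s \<le> lyapunov 0 * exp (3 * K * suminf neg_gap)"
proof -
  assume "0 \<le> s"
  then obtain n where s: "t (2*n) \<le> s" "s < t (2*n+2)" by (rule cycle_cover)
  have "lyapunov s \<le> lyapunov (t (2*n)) * exp (3 * K * neg_gap n)"
    using lyapunov_cycle s by simp
  also have "\<dots> \<le> lyapunov 0 * exp (3 * K * (\<Sum>p<n. neg_gap p)) * exp (3 * K * neg_gap n)"
    using lyapunov_even_le[of n] by (intro mult_right_mono) auto
  also have "\<dots> = lyapunov 0 * exp (3 * K * (\<Sum>p<Suc n. neg_gap p))"
    by (simp add: mult_exp_exp distrib_left mult.assoc)
  also have "\<dots> \<le> lyapunov 0 * exp (3 * K * suminf neg_gap)"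
    using lyapunov_nonneg sum_neg_gap_le[of "Suc n"] K_pos by (intro mult_left_mono) auto
  finally show ?thesis .
qed

lemma DX_bounded: "\<exists>R\<ge>0. \<forall>s\<ge>0. DX s \<le> R"
proof -
  obtain R where R: "R \<ge> 0" "\<Phi> R > lyapunov 0 * exp (3 * K * suminf neg_gap)"
    using running_min_integral_unbounded[OF psi_int] by blast
  have "DX s \<le> R" if "s \<ge> 0" for s
  proof (rule ccontr)
    assume "\<not> DX s \<le> R"
    then have "\<Phi> R \<le> \<Phi> (DX s)" using running_min_integral_mono R by simp
    also have "\<dots> \<le> lyapunov s" using DV_nonneg by simp
    also have "\<dots> \<le> lyapunov 0 * exp (3 * K * suminf neg_gap)" using lyapunov_bounded that .
    finally show False using R by simp
  qed
  with R show ?thesis by blast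
qed

context
  fixes R :: real
  assumes R: "\<And>s. 0 \<le> s \<Longrightarrow> DX s \<le> R"
begin

text \<open>Positive phases last longer than 1/K and contract D_V at rate at least \<phi>(R).\<close>
definition decay_factor :: real where
  "decay_factor = exp (- \<phi> R / K)"

lemma decay_factor_pos: "0 < decay_factor" and decay_factor_less_1: "decay_factor < 1"
  unfolding decay_factor_def using running_min_pos K_pos by auto

lemma DV_positive_phase_le: "DV (t (2*n+1)) \<le> DV (t (2*n)) * decay_factor"
proof -
  have "DV (t (2*n+1)) \<le> DV (t (2*n)) * exp (- \<phi> R * (t (2*n+1) - t (2*n)))"
    using t_le[of "2*n" "2*n+1"] t_nonneg[of "2*n"]
    by (intro DV_decay_positive_phase) (auto intro!: running_min_antimono R)
  also have "\<dots> \<le> DV (t (2*n)) * decay_factor"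
  proof (rule mult_left_mono[OF _ DV_nonneg])
    have "\<phi> R * (1 / K) \<le> \<phi> R * (t (2*n+1) - t (2*n))"
      using gap_pos[of n] running_min_pos[of R] by (intro mult_left_mono) auto
    then show "exp (- \<phi> R * (t (2*n+1) - t (2*n))) \<le> decay_factor"
      unfolding decay_factor_def by simp
  qed
  finally show ?thesis .
qed

lemma DV_even_le:
  "DV (t (2*n)) \<le> DV 0 * exp (2 * K * (\<Sum>p<n. neg_gap p)) * decay_factor ^ n"
proof (induction n)
  case (Suc n)
  have "DV (t (2 * Suc n)) \<le> DV (t (2*n+1)) * exp (2 * K * neg_gap n)"
    using DV_growth[of "2*n+1" "t (2*n+1)" "t (2*n+2)"] t_le[of "2*n+1" "2*n+2"]
    by (simp add: neg_gap_def)
  also have "\<dots> \<le> DV (t (2*n)) * decay_factor * exp (2 * K * neg_gap n)"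
    using DV_positive_phase_le by (intro mult_right_mono) auto
  also have "\<dots> \<le> DV 0 * exp (2 * K * (\<Sum>p<n. neg_gap p)) * decay_factor ^ n
                    * decay_factor * exp (2 * K * neg_gap n)"
    using Suc.IH decay_factor_pos by (intro mult_right_mono) auto
  finally show ?case by (simp add: mult_exp_exp algebra_simps)
qed (simp add: t0)

lemma DV_le_after:
  assumes "t (2*n) \<le> s"
  shows "DV s \<le> DV 0 * exp (2 * K * suminf neg_gap) * decay_factor ^ n"
proof -
  have "0 \<le> s" using assms t_nonneg[of "2*n"] by linarith
  then obtain k where k: "t (2*k) \<le> s" "s < t (2*k+2)" by (rule cycle_cover)
  have "n \<le> k"
  proof (rule ccontr)
    assume "\<not> n \<le> k"
    then have "t (2*k+2) \<le> t (2*n)" by (intro t_le) simp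
    with k assms show False by simp
  qed
  have "DV s \<le> DV (t (2*k)) * exp (2 * K * neg_gap k)"
    using DV_cycle k by simp
  also have "\<dots> \<le> DV 0 * exp (2 * K * (\<Sum>p<k. neg_gap p)) * decay_factor ^ k
                    * exp (2 * K * neg_gap k)"
    using DV_even_le[of k] by (intro mult_right_mono) auto
  also have "\<dots> = DV 0 * exp (2 * K * (\<Sum>p<Suc k. neg_gap p)) * decay_factor ^ k"
    by (simp add: mult_exp_exp distrib_left mult_ac)
  also have "\<dots> \<le> DV 0 * exp (2 * K * suminf neg_gap) * decay_factor ^ n"
  proof (rule mult_mono)
    show "DV 0 * exp (2 * K * (\<Sum>p<Suc k. neg_gap p)) \<le> DV 0 * exp (2 * K * suminf neg_gap)"
      using DV_nonneg sum_neg_gap_le[of "Suc k"] K_pos by (intro mult_left_mono) auto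
    show "decay_factor ^ k \<le> decay_factor ^ n"
      using decay_factor_pos decay_factor_less_1 \<open>n \<le> k\<close> by (intro power_decreasing) auto
  qed (use DV_nonneg decay_factor_pos in auto)
  finally show ?thesis .
qed

lemma DV_tendsto_0: "(DV \<longlongrightarrow> 0) at_top"
proof (rule order_tendstoI)
  fix a :: real assume "a < 0"
  then have "a < DV s" for s using DV_nonneg[of s] by linarith
  then show "eventually (\<lambda>s. a < DV s) at_top" by simp
next
  fix a :: real assume "0 < a"
  define A where "A = DV 0 * exp (2 * K * suminf neg_gap)"
  have "(\<lambda>n. A * decay_factor ^ n) \<longlonglongrightarrow> A * 0"
    using decay_factor_pos decay_factor_less_1 by (intro tendsto_intros LIMSEQ_power_zero) auto
  then have "eventually (\<lambda>n. A * decay_factor ^ n < a) sequentially"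
    using \<open>0 < a\<close> by (intro order_tendstoD) auto
  then obtain n where "A * decay_factor ^ n < a"
    by (auto simp: eventually_sequentially)
  then have "\<forall>s\<ge>t (2*n). DV s < a"
    using DV_le_after[of n] unfolding A_def by fastforce
  then show "eventually (\<lambda>s. DV s < a) at_top"
    by (auto simp: eventually_at_top_linorder)
qed

end

lemma flocking: "(\<exists>dstar>0. \<forall>s\<ge>0. DX s \<le> dstar) \<and> (DV \<longlongrightarrow> 0) at_top"
proof -
  obtain R where "R \<ge> 0" "\<forall>s\<ge>0. DX s \<le> R" using DX_bounded by blast
  then have "\<forall>s\<ge>0. DX s \<le> R + 1" "R + 1 > 0" by force+
  with DV_tendsto_0[of R] \<open>\<forall>s\<ge>0. DX s \<le> R\<close> show ?thesis by blast
qed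

end

theorem theorem6p1:
  fixes N :: nat
    and \<psi> :: "real \<Rightarrow> real"
    and K :: real
    and t :: "nat \<Rightarrow> real"
    and x v :: "nat \<Rightarrow> real \<Rightarrow> real ^ 'd"
  assumes N2: "N \<ge> 2"
    and psi_pos: "\<forall>r. \<psi> r > 0"
    and psi_bdd: "bounded (range \<psi>)"
    and psi_cont: "continuous_on UNIV \<psi>"
    and K_def: "K = (SUP r. \<psi> r)"
    and psi_int: "(\<integral>\<^sup>+ y\<in>{0..}. ennreal (Inf (\<psi> ` {0..y})) \<partial>lborel) = \<infinity>"
    and t_mono: "strict_mono t"
    and t0: "t 0 = 0"
    and t_lim: "filterlim t at_top sequentially"
    and gap_neg: "\<forall>n. t (2*n+2) - t (2*n+1) < ln 2 / K"
    and gap_pos: "\<forall>n. t (2*n+1) - t (2*n) > 1 / K"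
    and sum_fin: "summable (\<lambda>p. ln (exp (K * (t (2*p+2) - t (2*p+1)))
                                    / (2 - exp (K * (t (2*p+2) - t (2*p+1))))))"
    and x_cont: "\<forall>i<N. continuous_on {0..} (x i)"
    and v_cont: "\<forall>i<N. continuous_on {0..} (v i)"
    and x_ode: "\<forall>i<N. \<forall>n. \<forall>s\<in>{t n<..<t (Suc n)}.
                  (x i has_vector_derivative v i s) (at s)"
    and v_ode: "\<forall>i<N. \<forall>n. \<forall>s\<in>{t n<..<t (Suc n)}.
                  (v i has_vector_derivative
                     ((1 / (real N - 1)) *\<^sub>R
                       (\<Sum>j\<in>{..<N} - {i}. (switch_alpha t s * \<psi> (norm (x i s - x j s)))
                                             *\<^sub>R (v j s - v i s)))) (at s)"
  shows "(\<exists>dstar>0. \<forall>s\<ge>0. diamX N x s \<le> dstar)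
         \<and> ((\<lambda>s. diamX N v s) \<longlongrightarrow> 0) at_top"
proof -
  interpret switched_flocking \<psi> N K t x v
    using assms by unfold_locales (auto simp: consensus_field_def)
  show ?thesis by (rule flocking)
qed

end
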